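(* Let $a\in(0,\infty)$ and $b\in\mathbb{Z}\cap[0,a+1)$. Then (i) $\exp\left(-\frac{b^3}{6a^2}\right)\le \dfrac{a^{\overline{b}}}{a^b\exp\left(\frac{b(b-1)}{2a}\right)}\le 1$; (ii) $1\le \dfrac{a^{\overline{b}}}{a^b\exp\left(\frac{b(b-1)}{2a}-\frac{b(b-1)(2b-1)}{12a^2}\right)}\le \exp\left(\frac{b^4}{12a^3}\right)$.
   Context: $a^{\overline{b}}=a(a+1)\cdots(a+b-1)$ denotes the rising factorial (with $a^{\overline{0}}=1$). *)

theory Defs
  imports Complex_Main
begin

end

theory Submission
  imports Defs
begin

(* Since pochhammer a b = a^b * prod_{k<b} (1 + k/a), every ratio in the statement equals
   exp (L - E) with L = sum_{k<b} ln (1 + k/a). The Taylor bounds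
   x - x^2/2 <= ln (1 + x) <= min x (x - x^2/2 + x^3/3) for x >= 0, summed over x = k/a
   with the power sums of 0, ..., b - 1, pin L between polynomials in b and 1/a. *)

lemma ln_add_one_ge_taylor2:
  fixes x :: real assumes "0 \<le> x" shows "x - x\<^sup>2 / 2 \<le> ln (1 + x)"
proof -
  let ?f = "\<lambda>t::real. ln (1 + t) - t + t\<^sup>2 / 2"
  have "?f 0 \<le> ?f x"
  proof (rule DERIV_nonneg_imp_nondecreasing[OF assms])
    fix t :: real assume t: "0 \<le> t"
    have "DERIV ?f t :> 1 / (1 + t) - 1 + t"
      using t by (auto intro!: derivative_eq_intros)
    moreover have "1 / (1 + t) - 1 + t = t\<^sup>2 / (1 + t)"
      using t by (simp add: field_simps power2_eq_square)
    ultimately show "\<exists>y. DERIV ?f t :> y \<and> 0 \<le> y" using t by auto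
  qed
  then show ?thesis by simp
qed

lemma ln_add_one_le_taylor3:
  fixes x :: real assumes "0 \<le> x" shows "ln (1 + x) \<le> x - x\<^sup>2 / 2 + x ^ 3 / 3"
proof -
  let ?f = "\<lambda>t::real. t - t\<^sup>2 / 2 + t ^ 3 / 3 - ln (1 + t)"
  have "?f 0 \<le> ?f x"
  proof (rule DERIV_nonneg_imp_nondecreasing[OF assms])
    fix t :: real assume t: "0 \<le> t"
    have "DERIV ?f t :> 1 - t + t\<^sup>2 - 1 / (1 + t)"
      using t by (auto intro!: derivative_eq_intros simp: power2_eq_square)
    moreover have "1 - t + t\<^sup>2 - 1 / (1 + t) = t ^ 3 / (1 + t)"
      using t by (simp add: field_simps power2_eq_square power3_eq_cube)
    ultimately show "\<exists>y. DERIV ?f t :> y \<and> 0 \<le> y" using t by auto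
  qed
  then show ?thesis by simp
qed

lemma sum_lessThan_of_nat: "(\<Sum>k<n. real k) = real n * (real n - 1) / 2"
  by (induction n) (auto simp: field_simps)

lemma sum_lessThan_of_nat_power2:
  "(\<Sum>k<n. real k ^ 2) = real n * (real n - 1) * (2 * real n - 1) / 6"
  by (induction n) (auto simp: field_simps power2_eq_square)

lemma sum_lessThan_of_nat_power3: "(\<Sum>k<n. real k ^ 3) = (real n * (real n - 1))\<^sup>2 / 4"
  by (induction n) (auto simp: field_simps power2_eq_square power3_eq_cube)

lemma pochhammer_eq_power_mult_exp_sum_ln:
  fixes a :: real assumes "0 < a"
  shows "pochhammer a b = a ^ b * exp (\<Sum>k<b. ln (1 + real k / a))"
proof -
  have "pochhammer a b = (\<Prod>k<b. a * (1 + real k / a))"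
    using assms by (simp add: pochhammer_prod atLeast0LessThan distrib_left)
  also have "\<dots> = a ^ b * (\<Prod>k<b. exp (ln (1 + real k / a)))"
    using assms by (simp add: prod.distrib add_pos_nonneg)
  finally show ?thesis by (simp add: exp_sum)
qed

lemma pochhammer_div_power_mult_exp:
  fixes a :: real assumes "0 < a"
  shows "pochhammer a b / (a ^ b * exp E) = exp ((\<Sum>k<b. ln (1 + real k / a)) - E)"
  using assms by (simp add: pochhammer_eq_power_mult_exp_sum_ln exp_diff)

lemma sum_ln_add_one_div_le:
  fixes a :: real assumes "0 < a"
  shows "(\<Sum>k<b. ln (1 + real k / a)) \<le> real b * (real b - 1) / (2 * a)"
proof -
  have "(\<Sum>k<b. ln (1 + real k / a)) \<le> (\<Sum>k<b. real k / a)"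
    using assms by (intro sum_mono ln_add_one_self_le_self) simp
  also have "\<dots> = real b * (real b - 1) / (2 * a)"
    by (simp add: sum_divide_distrib[symmetric] sum_lessThan_of_nat)
  finally show ?thesis .
qed

lemma sum_ln_add_one_div_ge:
  fixes a :: real assumes "0 < a"
  shows "real b * (real b - 1) / (2 * a) - real b * (real b - 1) * (2 * real b - 1) / (12 * a\<^sup>2)
         \<le> (\<Sum>k<b. ln (1 + real k / a))"
proof -
  have "(\<Sum>k<b. real k / a - (real k / a)\<^sup>2 / 2) \<le> (\<Sum>k<b. ln (1 + real k / a))"
    using assms by (intro sum_mono ln_add_one_ge_taylor2) simp
  then show ?thesis
    by (simp add: sum_subtractf power_divide sum_divide_distrib[symmetric]
        sum_lessThan_of_nat sum_lessThan_of_nat_power2)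
qed

lemma sum_ln_add_one_div_le_cubic:
  fixes a :: real assumes "0 < a"
  shows "(\<Sum>k<b. ln (1 + real k / a))
         \<le> real b * (real b - 1) / (2 * a) - real b * (real b - 1) * (2 * real b - 1) / (12 * a\<^sup>2)
           + (real b * (real b - 1))\<^sup>2 / (12 * a ^ 3)"
proof -
  have "(\<Sum>k<b. ln (1 + real k / a)) \<le> (\<Sum>k<b. real k / a - (real k / a)\<^sup>2 / 2 + (real k / a) ^ 3 / 3)"
    using assms by (intro sum_mono ln_add_one_le_taylor3) simp
  then show ?thesis
    by (simp add: sum.distrib sum_subtractf power_divide sum_divide_distrib[symmetric]
        sum_lessThan_of_nat sum_lessThan_of_nat_power2 sum_lessThan_of_nat_power3)
qed

theorem lemma2:
  fixes a :: real and b :: nat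
  assumes "a > 0" and "real b < a + 1"
  shows "(exp (- (real b ^ 3) / (6 * a ^ 2))
           \<le> pochhammer a b / (a ^ b * exp (real b * (real b - 1) / (2 * a)))
         \<and> pochhammer a b / (a ^ b * exp (real b * (real b - 1) / (2 * a))) \<le> 1)
         \<and> (1 \<le> pochhammer a b / (a ^ b * exp (real b * (real b - 1) / (2 * a)
                 - real b * (real b - 1) * (2 * real b - 1) / (12 * a ^ 2)))
         \<and> pochhammer a b / (a ^ b * exp (real b * (real b - 1) / (2 * a)
                 - real b * (real b - 1) * (2 * real b - 1) / (12 * a ^ 2)))
             \<le> exp (real b ^ 4 / (12 * a ^ 3)))"
proof -
  have "real b * (real b - 1) * (2 * real b - 1) \<le> 2 * real b ^ 3"
    by (cases b) (auto simp: field_simps power3_eq_cube)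
  from divide_right_mono[OF this, of "12 * a\<^sup>2"]
  have cubic: "real b * (real b - 1) * (2 * real b - 1) / (12 * a\<^sup>2) \<le> real b ^ 3 / (6 * a\<^sup>2)"
    by simp
  have "0 \<le> real b * (real b - 1)"
    by (cases b) auto
  moreover have "real b * (real b - 1) \<le> real b ^ 2"
    by (simp add: power2_eq_square algebra_simps)
  ultimately have "(real b * (real b - 1))\<^sup>2 \<le> (real b ^ 2) ^ 2"
    by (rule power_mono[rotated])
  then have "(real b * (real b - 1))\<^sup>2 \<le> real b ^ 4"
    by (simp add: power_mult[symmetric])
  then have quartic: "(real b * (real b - 1))\<^sup>2 / (12 * a ^ 3) \<le> real b ^ 4 / (12 * a ^ 3)"
    using assms(1) by (simp add: divide_right_mono)
  show ?thesis
    unfolding pochhammer_div_power_mult_exp[OF assms(1)]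
    using sum_ln_add_one_div_le[OF assms(1), of b] sum_ln_add_one_div_ge[OF assms(1), of b]
      sum_ln_add_one_div_le_cubic[OF assms(1), of b] cubic quartic
    by simp
qed

end
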